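(* (1) Fix $\xi\in[0,0.13]$. Then both $\eta_\xi(y)$ and $\beta(y)$ are strictly decreasing in $y\in[\cos(2\pi/9),1)$. Consequently, if $y_i=\cos(2\pi/n_i)$ with integers $n_i\ge9$ for $i\in\{2,3,5,6\}$, then $\eta_\xi(y_i)\in[0,0.13]$ and $\beta(y_i)\in[1,2]$ for all $i\in\{2,3,5,6\}$. (2) Fix $y\in(0,1)$. Then $\eta_\xi(y)$ is strictly increasing in $\xi\in[0,\infty)$.
   Context: For $\xi\ge0$ and $y\in(0,1)$, $\eta_\xi(y)$ is the unique positive root $\delta$ of $(2+y)\delta^2+2(2+5y-(1+\xi)^2)\delta-4(1-y)(1+\xi)^2=0$, namely $$\eta_\xi(y)=\frac{-2-5y+(1+\xi)^2+\sqrt{(2+5y-(1+\xi)^2)^2+4(2+y)(1-y)(1+\xi)^2}}{2+y}.$$ Let $b(y)=\frac{16}{y+1}-7$, $c_n=\cos(2\pi/n)$, and $\beta(y)=b(y)$ for $y\in[c_{10},1]$, $\beta(y)=\frac{(2-b(c_{10}))b(y)-(2-b(c_9))b(c_{10})}{b(c_9)-b(c_{10})}$ for $y\in[c_9,c_{10}]$. *)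

theory Defs
  imports "HOL-Analysis.Analysis"
begin

definition eta :: "real \<Rightarrow> real \<Rightarrow> real" where
  "eta \<xi> y = (-2 - 5*y + (1+\<xi>)^2
     + sqrt ((2 + 5*y - (1+\<xi>)^2)^2 + 4*(2+y)*(1-y)*(1+\<xi>)^2)) / (2 + y)"

definition bfun :: "real \<Rightarrow> real" where
  "bfun y = 16 / (y + 1) - 7"

definition cn :: "nat \<Rightarrow> real" where
  "cn n = cos (2 * pi / real n)"

definition beta :: "real \<Rightarrow> real" where
  "beta y = (if cn 10 \<le> y then bfun y
     else ((2 - bfun (cn 10)) * bfun y - (2 - bfun (cn 9)) * bfun (cn 10))
          / (bfun (cn 9) - bfun (cn 10)))"

end

theory Submission
  imports Defs
begin

text \<open>
  For \<open>d \<ge> 0\<close> the quadratic whose positive root is \<open>eta \<xi> y\<close> is positive exactly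
  above that root, since its leading coefficient is positive and its constant term negative.
  Both monotonicity claims for \<open>eta\<close> follow by evaluating a perturbed quadratic at the old
  root d: raising y from y1 to y2 adds (y2 - y1)(d^2 + 10 d + 4 (1+\<xi>)^2) > 0, raising \<open>\<xi>\<close>
  from \<open>\<xi>1\<close> to \<open>\<xi>2\<close> subtracts ((1+\<xi>2)^2 - (1+\<xi>1)^2)(2 d + 4 (1-y)) > 0.
  The function \<open>beta\<close> is a strictly increasing function of the strictly decreasing \<open>bfun\<close>:
  the identity up to b(c10), then the line through (b(c10), b(c10)) and (b(c9), 2).
  The numerical bounds rest on c9 > 0.765 and c10 > 0.8, both from the triple angle
  formula, and on \<open>eta 0.13 0.765 < 0.13\<close>.
\<close>

lemma quadratic_pos_root:
  fixes A B C :: real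
  assumes "0 < A" "0 < C"
  defines "e \<equiv> (-B + sqrt (B\<^sup>2 + A*C)) / A"
  shows "0 < e"
    and "\<And>d. 0 \<le> d \<Longrightarrow> 0 < A*d\<^sup>2 + 2*B*d - C \<longleftrightarrow> e < d"
    and "\<And>d. 0 \<le> d \<Longrightarrow> A*d\<^sup>2 + 2*B*d - C < 0 \<longleftrightarrow> d < e"
proof -
  define q where "q = sqrt (B\<^sup>2 + A*C)"
  have disc_pos: "0 \<le> B\<^sup>2 + A*C"
    using assms by (intro add_nonneg_nonneg) auto
  have q_sq: "q\<^sup>2 = B\<^sup>2 + A*C" and q_nonneg: "0 \<le> q"
    unfolding q_def using disc_pos by simp_all
  have "\<bar>B\<bar>\<^sup>2 < q\<^sup>2"
    using q_sq assms by simp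
  then have q_gt: "\<bar>B\<bar> < q"
    using q_nonneg by (meson abs_ge_zero power_less_imp_less_base)
  define r where "r = (-B - q) / A"
  have r_neg: "r < 0"
    unfolding r_def using q_gt assms(1) by (auto simp: divide_neg_pos abs_if split: if_splits)
  have e_eq: "e = (-B + q) / A"
    unfolding e_def q_def ..
  show "0 < e"
    unfolding e_eq using q_gt assms(1) by (auto simp: abs_if split: if_splits)
  have factor: "A*d\<^sup>2 + 2*B*d - C = A * (d - e) * (d - r)" for d
    unfolding e_eq r_def using assms(1) q_sq by (simp add: field_simps power2_eq_square)
  show "0 < A*d\<^sup>2 + 2*B*d - C \<longleftrightarrow> e < d" "A*d\<^sup>2 + 2*B*d - C < 0 \<longleftrightarrow> d < e"
    if "0 \<le> d" for d
  proof -
    have "0 < d - r"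
      using that r_neg by simp
    then show "0 < A*d\<^sup>2 + 2*B*d - C \<longleftrightarrow> e < d" "A*d\<^sup>2 + 2*B*d - C < 0 \<longleftrightarrow> d < e"
      unfolding factor using assms(1) by (simp_all add: zero_less_mult_iff mult_less_0_iff)
  qed
qed

definition eta_quadratic :: "real \<Rightarrow> real \<Rightarrow> real \<Rightarrow> real" where
  "eta_quadratic \<xi> y d = (2+y)*d\<^sup>2 + 2*(2+5*y-(1+\<xi>)\<^sup>2)*d - 4*(1-y)*(1+\<xi>)\<^sup>2"

lemma eta_eq_pos_root:
  "eta \<xi> y = (-(2+5*y-(1+\<xi>)\<^sup>2)
     + sqrt ((2+5*y-(1+\<xi>)\<^sup>2)\<^sup>2 + (2+y)*(4*(1-y)*(1+\<xi>)\<^sup>2))) / (2+y)"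
  unfolding eta_def by (simp add: algebra_simps)

lemma
  assumes "\<xi> \<noteq> -1" "-2 < y" "y < 1"
  shows eta_pos: "0 < eta \<xi> y"
    and eta_less_iff: "0 \<le> d \<Longrightarrow> eta \<xi> y < d \<longleftrightarrow> 0 < eta_quadratic \<xi> y d"
    and less_eta_iff: "0 \<le> d \<Longrightarrow> d < eta \<xi> y \<longleftrightarrow> eta_quadratic \<xi> y d < 0"
proof -
  have "0 < 2 + y" "0 < 4*(1-y)*(1+\<xi>)\<^sup>2"
    using assms by simp_all
  note root = quadratic_pos_root[OF this, where B = "2+5*y-(1+\<xi>)\<^sup>2", folded eta_eq_pos_root]
  show "0 < eta \<xi> y"
    using root(1) .
  show "0 \<le> d \<Longrightarrow> eta \<xi> y < d \<longleftrightarrow> 0 < eta_quadratic \<xi> y d"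
    using root(2) unfolding eta_quadratic_def by simp
  show "0 \<le> d \<Longrightarrow> d < eta \<xi> y \<longleftrightarrow> eta_quadratic \<xi> y d < 0"
    using root(3) unfolding eta_quadratic_def by simp
qed

lemma eta_quadratic_eta:
  assumes "\<xi> \<noteq> -1" "-2 < y" "y < 1"
  shows "eta_quadratic \<xi> y (eta \<xi> y) = 0"
  using eta_less_iff[OF assms, of "eta \<xi> y"] less_eta_iff[OF assms, of "eta \<xi> y"] eta_pos[OF assms]
  by linarith

lemma eta_strict_antimono_y:
  assumes "\<xi> \<noteq> -1"
  shows "strict_antimono_on {-2<..<1} (eta \<xi>)"
proof (rule monotone_onI)
  fix y\<^sub>1 y\<^sub>2 :: real
  assume y\<^sub>1: "y\<^sub>1 \<in> {-2<..<1}" and y\<^sub>2: "y\<^sub>2 \<in> {-2<..<1}" and "y\<^sub>1 < y\<^sub>2"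
  define d where "d = eta \<xi> y\<^sub>1"
  have "0 < d"
    unfolding d_def using eta_pos assms y\<^sub>1 by simp
  have "eta_quadratic \<xi> y\<^sub>2 d = eta_quadratic \<xi> y\<^sub>2 d - eta_quadratic \<xi> y\<^sub>1 d"
    unfolding d_def using eta_quadratic_eta assms y\<^sub>1 by simp
  also have "\<dots> = (y\<^sub>2 - y\<^sub>1) * (d\<^sup>2 + 10*d + 4*(1+\<xi>)\<^sup>2)"
    unfolding eta_quadratic_def by (simp add: algebra_simps)
  also have "\<dots> > 0"
    using \<open>y\<^sub>1 < y\<^sub>2\<close> \<open>0 < d\<close> by (intro mult_pos_pos) (auto intro!: add_pos_nonneg)
  finally show "eta \<xi> y\<^sub>2 < eta \<xi> y\<^sub>1"
    unfolding d_def[symmetric] using eta_less_iff assms y\<^sub>2 \<open>0 < d\<close> by simp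
qed

lemma eta_strict_mono_xi:
  assumes "-2 < y" "y < 1"
  shows "strict_mono_on {-1<..} (\<lambda>\<xi>. eta \<xi> y)"
proof (rule strict_mono_onI)
  fix \<xi>\<^sub>1 \<xi>\<^sub>2 :: real
  assume "\<xi>\<^sub>1 \<in> {-1<..}" "\<xi>\<^sub>2 \<in> {-1<..}" "\<xi>\<^sub>1 < \<xi>\<^sub>2"
  then have \<xi>\<^sub>1: "\<xi>\<^sub>1 \<noteq> -1" and \<xi>\<^sub>2: "\<xi>\<^sub>2 \<noteq> -1" and squares: "(1+\<xi>\<^sub>1)\<^sup>2 < (1+\<xi>\<^sub>2)\<^sup>2"
    by (auto intro: power_strict_mono)
  define d where "d = eta \<xi>\<^sub>1 y"
  have "0 < d"
    unfolding d_def using eta_pos \<xi>\<^sub>1 assms by simp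
  have "eta_quadratic \<xi>\<^sub>2 y d = eta_quadratic \<xi>\<^sub>2 y d - eta_quadratic \<xi>\<^sub>1 y d"
    unfolding d_def using eta_quadratic_eta \<xi>\<^sub>1 assms by simp
  also have "\<dots> = - (((1+\<xi>\<^sub>2)\<^sup>2 - (1+\<xi>\<^sub>1)\<^sup>2) * (2*d + 4*(1-y)))"
    unfolding eta_quadratic_def by (simp add: algebra_simps)
  also have "\<dots> < 0"
    using squares \<open>0 < d\<close> assms by (simp add: mult_pos_pos)
  finally show "eta \<xi>\<^sub>1 y < eta \<xi>\<^sub>2 y"
    unfolding d_def[symmetric] using less_eta_iff \<xi>\<^sub>2 assms \<open>0 < d\<close> by simp
qed

lemma eta_mono:
  assumes "-1 < \<xi>\<^sub>1" "\<xi>\<^sub>1 \<le> \<xi>\<^sub>2" "-2 < y\<^sub>2" "y\<^sub>2 \<le> y\<^sub>1" "y\<^sub>1 < 1"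
  shows "eta \<xi>\<^sub>1 y\<^sub>1 \<le> eta \<xi>\<^sub>2 y\<^sub>2"
proof -
  have "eta \<xi>\<^sub>1 y\<^sub>1 \<le> eta \<xi>\<^sub>1 y\<^sub>2"
    using eta_strict_antimono_y[of \<xi>\<^sub>1] assms
    by (cases "y\<^sub>2 = y\<^sub>1") (auto simp: monotone_on_def intro: less_imp_le)
  also have "\<dots> \<le> eta \<xi>\<^sub>2 y\<^sub>2"
    using eta_strict_mono_xi[of y\<^sub>2] assms
    by (cases "\<xi>\<^sub>1 = \<xi>\<^sub>2") (auto simp: monotone_on_def intro: less_imp_le)
  finally show ?thesis .
qed

lemma eta_less_0_13:
  assumes "0 \<le> \<xi>" "\<xi> \<le> 0.13" "0.765 \<le> y" "y < 1"
  shows "eta \<xi> y < 0.13"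
proof -
  have "eta \<xi> y \<le> eta 0.13 0.765"
    using assms by (intro eta_mono) simp_all
  also have "eta 0.13 0.765 < (0.13::real)"
    by (subst eta_less_iff) (simp_all add: eta_quadratic_def power_divide)
  finally show ?thesis .
qed

lemma two_pi_div_le_pi:
  assumes "2 \<le> n"
  shows "2*pi/real n \<le> pi"
proof -
  have "2*pi \<le> real n * pi"
    using assms by (intro mult_right_mono) auto
  then show ?thesis
    using assms by (simp add: divide_le_eq)
qed

lemma cn_strict_mono:
  assumes "2 \<le> m" "m < n"
  shows "cn m < cn n"
  unfolding cn_def using assms two_pi_div_le_pi[OF assms(1)]
  by (intro cos_monotone_0_pi) (auto simp: frac_less2)

lemma cn_less_1:
  assumes "2 \<le> n"
  shows "cn n < 1"
  unfolding cn_def using assms two_pi_div_le_pi[OF assms] cos_monotone_0_pi[of 0 "2*pi/real n"]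
  by simp

lemma cn_9_gt: "0.765 < cn 9"
proof -
  define c where "c = cos (2*pi/9)"
  have "cn 9 = c"
    unfolding cn_def c_def by simp
  have "cos (pi/3) < c"
    unfolding c_def by (rule cos_monotone_0_pi) auto
  then have "1/2 < c"
    unfolding cos_60 .
  have "cos (3*(2*pi/9)) = -1/2"
    using cos_120 by (simp add: field_simps)
  then have root: "8*c^3 - 6*c + 1 = 0"
    unfolding c_def cos_treble_cos by simp
  have "(8*0.765^3 - 6*0.765 + 1) - (8*c^3 - 6*c + 1) = (0.765 - c) * (8*(0.765\<^sup>2 + 0.765*c + c\<^sup>2) - 6)"
    by (simp add: field_simps power2_eq_square power3_eq_cube)
  moreover have "(1/2) * (1/2) \<le> c * c"
    using \<open>1/2 < c\<close> by (intro mult_mono) auto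
  then have "0 < 8*(0.765\<^sup>2 + 0.765*c + c\<^sup>2) - (6::real)"
    using \<open>1/2 < c\<close> by (simp add: power2_eq_square)
  moreover have "8*0.765^3 - 6*0.765 + 1 < (0::real)"
    by (simp add: power_divide)
  ultimately have "(0.765 - c) * (8*(0.765\<^sup>2 + 0.765*c + c\<^sup>2) - 6) < 0"
    using root by linarith
  then show ?thesis
    using \<open>cn 9 = c\<close> \<open>0 < 8*(0.765\<^sup>2 + 0.765*c + c\<^sup>2) - 6\<close> by (simp add: mult_less_0_iff)
qed

lemma cn_10_gt: "0.8 < cn 10"
proof -
  define c where "c = cos (pi/5)"
  have "cn 10 = c"
    unfolding cn_def c_def by simp
  have "cos (pi/3) < c"
    unfolding c_def by (rule cos_monotone_0_pi) auto
  then have "1/2 < c"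
    unfolding cos_60 .
  have "cos (3*(pi/5)) = - cos (2*(pi/5))"
    using cos_pi_minus[of "2*(pi/5)"] by (simp add: field_simps)
  then have "4*c^3 - 3*c + (2*c\<^sup>2 - 1) = 0"
    unfolding c_def cos_treble_cos cos_double_cos by simp
  moreover have "4*c^3 - 3*c + (2*c\<^sup>2 - 1) = (c + 1) * (4*c\<^sup>2 - 2*c - 1)"
    by (simp add: algebra_simps power2_eq_square power3_eq_cube)
  ultimately have root: "4*c\<^sup>2 - 2*c - 1 = 0"
    using \<open>1/2 < c\<close> by simp
  have "4*c\<^sup>2 - 2*c - 1 = (c - 0.8) * (4*c + 1.2) - 0.04"
    by (simp add: algebra_simps power2_eq_square)
  then have "0 < (c - 0.8) * (4*c + 1.2)"
    using root by simp
  then show ?thesis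
    using \<open>cn 10 = c\<close> \<open>1/2 < c\<close> by (simp add: zero_less_mult_iff)
qed

lemma bfun_le_iff:
  assumes "-1 < x" "-1 < y"
  shows "bfun y \<le> bfun x \<longleftrightarrow> x \<le> y"
  using assms by (simp add: bfun_def divide_le_eq le_divide_eq field_simps)

lemma bfun_less_iff:
  assumes "-1 < x" "-1 < y"
  shows "bfun y < bfun x \<longleftrightarrow> x < y"
  using bfun_le_iff[OF assms(2,1)] by linarith

lemma strict_mono_glue:
  fixes f g :: "'a::linorder \<Rightarrow> 'b::linorder"
  assumes "strict_mono f" "strict_mono g" "f a = g a"
  shows "strict_mono (\<lambda>t. if t \<le> a then f t else g t)"
proof (rule strict_monoI)
  fix s t :: 'a
  assume "s < t"
  consider "t \<le> a" | "s \<le> a" "a < t" | "a < s"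
    using \<open>s < t\<close> by force
  then show "(if s \<le> a then f s else g s) < (if t \<le> a then f t else g t)"
  proof cases
    case 2
    have "f s \<le> f a"
      using \<open>s \<le> a\<close> assms(1) by (simp add: strict_mono_less_eq)
    also have "\<dots> < g t"
      using \<open>a < t\<close> assms(2,3) by (simp add: strict_mono_less)
    finally show ?thesis
      using 2 by auto
  qed (use \<open>s < t\<close> assms in \<open>auto simp: strict_mono_less\<close>)
qed

lemma line_through_diagonal_and_2:
  fixes a b :: real
  assumes "a < b"
  defines "L \<equiv> \<lambda>t. ((2 - a) * t - (2 - b) * a) / (b - a)"
  shows "L a = a" "L b = 2" "a < 2 \<Longrightarrow> strict_mono L"
proof -
  show "L a = a" "L b = 2"
    unfolding L_def using assms(1) by (simp_all add: field_simps)
  show "strict_mono L" if "a < 2"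
    unfolding L_def using assms(1) that
    by (intro strict_monoI) (simp add: divide_strict_right_mono)
qed

definition beta_of_b :: "real \<Rightarrow> real" where
  "beta_of_b t = (if t \<le> bfun (cn 10) then t
     else ((2 - bfun (cn 10)) * t - (2 - bfun (cn 9)) * bfun (cn 10))
          / (bfun (cn 9) - bfun (cn 10)))"

lemma bfun_cn_10_lt_bfun_cn_9: "bfun (cn 10) < bfun (cn 9)"
  using bfun_less_iff cn_9_gt cn_strict_mono[of 9 10] by simp

lemma bfun_cn_10_lt_2: "bfun (cn 10) < 2"
  using cn_10_gt by (simp add: bfun_def divide_less_eq)

lemma strict_mono_beta_of_b: "strict_mono beta_of_b"
  unfolding beta_of_b_def
  using line_through_diagonal_and_2[OF bfun_cn_10_lt_bfun_cn_9] bfun_cn_10_lt_2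
  by (intro strict_mono_glue) (auto simp: strict_mono_def)

lemma beta_eq_beta_of_b:
  assumes "-1 < y"
  shows "beta y = beta_of_b (bfun y)"
  using bfun_le_iff[of "cn 10" y] assms cn_10_gt by (simp add: beta_def beta_of_b_def)

lemma beta_strict_antimono: "strict_antimono_on {-1<..} beta"
proof (rule monotone_onI)
  fix x y :: real
  assume "x \<in> {-1<..}" "y \<in> {-1<..}" "x < y"
  then have "bfun y < bfun x"
    by (simp add: bfun_less_iff)
  then show "beta y < beta x"
    using \<open>x \<in> {-1<..}\<close> \<open>y \<in> {-1<..}\<close> strict_mono_beta_of_b
    by (simp add: beta_eq_beta_of_b strict_mono_less)
qed

lemma beta_cn_9: "beta (cn 9) = 2"
  using bfun_cn_10_lt_bfun_cn_9 line_through_diagonal_and_2(2)[OF bfun_cn_10_lt_bfun_cn_9] cn_9_gt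
  by (simp add: beta_eq_beta_of_b beta_of_b_def)

lemma beta_1: "beta 1 = 1"
  using cos_le_one by (simp add: beta_def cn_def bfun_def)

theorem lemma4p1:
  shows "(\<forall>\<xi>\<in>{0..0.13::real}.
            strict_antimono_on {cn 9..<1} (eta \<xi>)
          \<and> strict_antimono_on {cn 9..<1} beta
          \<and> (\<forall>n::nat. n \<ge> 9 \<longrightarrow>
               eta \<xi> (cn n) \<in> {0..0.13} \<and> beta (cn n) \<in> {1..2}))
       \<and> (\<forall>y::real. 0 < y \<and> y < 1 \<longrightarrow> strict_mono_on {0..} (\<lambda>\<xi>. eta \<xi> y))"
proof (intro conjI ballI allI impI)
  have c9_range: "{cn 9..<1} \<subseteq> {-2<..<1}" "{cn 9..<1} \<subseteq> {-1<..}"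
    using cn_9_gt by auto
  fix \<xi> :: real
  assume \<xi>: "\<xi> \<in> {0..0.13}"
  show "strict_antimono_on {cn 9..<1} (eta \<xi>)"
    using eta_strict_antimono_y[of \<xi>] \<xi> c9_range(1) by (auto intro: monotone_on_subset)
  show "strict_antimono_on {cn 9..<1} beta"
    using beta_strict_antimono c9_range(2) by (rule monotone_on_subset)
  fix n :: nat
  assume "9 \<le> n"
  then have n_range: "cn n \<in> {cn 9..<1}"
    using cn_strict_mono[of 9 n] cn_less_1[of n] by (cases "n = 9") auto
  show "eta \<xi> (cn n) \<in> {0..0.13}"
    using n_range \<xi> cn_9_gt eta_pos[of \<xi> "cn n"] eta_less_0_13[of \<xi> "cn n"] by auto
  have "beta 1 < beta (cn n)" "beta (cn n) \<le> beta (cn 9)"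
    using n_range beta_strict_antimono cn_9_gt
    by (auto simp: monotone_on_def less_eq_real_def)
  then show "beta (cn n) \<in> {1..2}"
    by (simp add: beta_1 beta_cn_9)
next
  fix y :: real
  assume "0 < y \<and> y < 1"
  then show "strict_mono_on {0..} (\<lambda>\<xi>. eta \<xi> y)"
    using eta_strict_mono_xi[of y] by (auto intro: monotone_on_subset)
qed

end
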